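(* Let $X,Y$ be complex Banach spaces, let $\emptyset\ne I\subseteq\mathbb R^n$ be closed with $I+I\subseteq I$, let $\mathcal B$ be any family of compact subsets of $X$ such that every $x\in X$ belongs to some $B\in\mathcal B$, and let $F:I\times X\to Y$ be uniformly continuous and $I$-asymptotically Bohr $\mathcal B$-almost periodic of type $1$. Suppose that: (a) for every $l>0$ and $M>0$ there exist $\mathbf t_0\in I$ and $k>0$ such that for every $\mathbf t\in I_{M+l}$ there exists $\mathbf t_0'\in I$ such that for every $\mathbf t_0''\in B(\mathbf t_0',l)\cap I$ we have $\mathbf t-\mathbf t_0''\in B(\mathbf t_0,kl)\cap I_M$; (b) there exists $L>0$ such that $I_{kL}\setminus I_{(k+1)L}\ne\emptyset$ for all $k\in\mathbb N$; (c) $I_M+I\subseteq I_M$ for all $M>0$. Then $F$ is $(\mathrm R,\mathcal B)$-multi-almost periodic, where $\mathrm R$ is the collection of all sequences in $I$. Furthermore, if $X=\{0\}$ and $\mathcal B=\{X\}$, then $F$ (viewed as a function $I\to Y$) is $I$-asymptotically Bohr almost periodic.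
   Context: $B(\mathbf t_0,l)$ is the closed Euclidean ball; $I_M:=\{\lambda\in I:|\lambda|\ge M\}$. $F$ is $I$-asymptotically Bohr $\mathcal B$-almost periodic of type 1 if for every $B\in\mathcal B$ and $\epsilon>0$ there exist $l>0$ and $M>0$ such that for each $\mathbf t_0\in I$ there exists $\tau\in B(\mathbf t_0,l)\cap I$ with $\|F(\mathbf t+\tau;x)-F(\mathbf t;x)\|_Y\le\epsilon$ whenever $\mathbf t,\mathbf t+\tau\in I_M$ and $x\in B$. $F$ is $(\mathrm R,\mathcal B)$-multi-almost periodic if for every $B\in\mathcal B$ and every sequence $(\mathbf b_k)\in\mathrm R$ there exist a subsequence $(\mathbf b_{k_l})$ and $F^\ast:I\times X\to Y$ with $F(\mathbf t+\mathbf b_{k_l};x)\to F^\ast(\mathbf t;x)$ uniformly for $x\in B$, $\mathbf t\in I$. A function $F:I\to Y$ is $I$-asymptotically Bohr almost periodic if $F=G+Q$ where $G:I\to Y$ is Bohr almost periodic (continuous, and for every $\epsilon>0$ there is $l>0$ such that for each $\mathbf t_0\in I$ there is $\tau\in B(\mathbf t_0,l)\cap I$ with $\|G(\mathbf t+\tau)-G(\mathbf t)\|_Y\le\epsilon$ for all $\mathbf t\in I$) and $Q:I\to Y$ is continuous with $\lim_{\mathbf t\in I,|\mathbf t|\to\infty}Q(\mathbf t)=0$. *)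

theory Defs
  imports "HOL-Analysis.Analysis"
begin

definition I_ge :: "(real ^ 'n) set \<Rightarrow> real \<Rightarrow> (real ^ 'n) set" where
  "I_ge I M = {lam \<in> I. norm lam \<ge> M}"

definition asymp_bohr_B_ap_type1 ::
  "(real ^ 'n) set \<Rightarrow> 'x set set \<Rightarrow> (real ^ 'n \<Rightarrow> 'x \<Rightarrow> 'y::real_normed_vector) \<Rightarrow> bool" where
  "asymp_bohr_B_ap_type1 I BB F \<longleftrightarrow>
     (\<forall>B\<in>BB. \<forall>\<epsilon>>0. \<exists>l>0. \<exists>M>0. \<forall>t0\<in>I. \<exists>\<tau>\<in>cball t0 l \<inter> I.
        \<forall>t x. t \<in> I_ge I M \<and> t + \<tau> \<in> I_ge I M \<and> x \<in> B \<longrightarrow>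
              norm (F (t + \<tau>) x - F t x) \<le> \<epsilon>)"

definition R_B_multi_ap ::
  "(real ^ 'n) set \<Rightarrow> (nat \<Rightarrow> real ^ 'n) set \<Rightarrow> 'x set set \<Rightarrow> (real ^ 'n \<Rightarrow> 'x \<Rightarrow> 'y::real_normed_vector) \<Rightarrow> bool" where
  "R_B_multi_ap I R BB F \<longleftrightarrow>
     (\<forall>B\<in>BB. \<forall>b\<in>R. \<exists>r::nat\<Rightarrow>nat. \<exists>Fs::real ^ 'n \<Rightarrow> 'x \<Rightarrow> 'y. strict_mono r \<and>
        uniform_limit (I \<times> B) (\<lambda>k (t, x). F (t + b (r k)) x) (\<lambda>(t, x). Fs t x) sequentially)"

definition bohr_ap :: "(real ^ 'n) set \<Rightarrow> (real ^ 'n \<Rightarrow> 'y::real_normed_vector) \<Rightarrow> bool" where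
  "bohr_ap I G \<longleftrightarrow> continuous_on I G \<and>
     (\<forall>\<epsilon>>0. \<exists>l>0. \<forall>t0\<in>I. \<exists>\<tau>\<in>cball t0 l \<inter> I. \<forall>t\<in>I. norm (G (t + \<tau>) - G t) \<le> \<epsilon>)"

definition asymp_bohr_ap :: "(real ^ 'n) set \<Rightarrow> (real ^ 'n \<Rightarrow> 'y::real_normed_vector) \<Rightarrow> bool" where
  "asymp_bohr_ap I F \<longleftrightarrow> (\<exists>G Q. bohr_ap I G \<and> continuous_on I Q \<and>
     (\<forall>\<epsilon>>0. \<exists>M. \<forall>t\<in>I. norm t \<ge> M \<longrightarrow> norm (Q t) \<le> \<epsilon>) \<and>
     (\<forall>t\<in>I. F t = G t + Q t))"

end

theory Submission
  imports Defs "HOL-Library.Diagonal_Subsequence"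
begin

text \<open>Conditions (a), (c) and the type 1 property show that every
  translate \<open>F(\<cdot> + b)\<close>, \<open>b \<in> I\<close>, is \<open>\<epsilon>\<close>-close on \<open>I \<times> B\<close> to a translate \<open>F(\<cdot> + c)\<close> with \<open>c\<close>
  in a fixed compact subset of \<open>I\<close>: for large \<open>b\<close> take an asymptotic \<open>\<epsilon>\<close>-period \<open>\<tau>\<close> near
  the point \<open>t0'\<close> supplied by (a) and put \<open>c = b - \<tau>\<close>. Given a sequence \<open>(b\<^sub>k)\<close>, a diagonal
  argument makes the compact shadows \<open>c\<close> converge simultaneously for \<open>\<epsilon> = 1/(j+1)\<close>, and uniform
  continuity of \<open>F\<close> turns this into uniform Cauchyness of \<open>F(\<cdot> + b\<^sub>k)\<close>.

  For the second part, (b) makes \<open>I\<close> unbounded, so there are asymptotic \<open>1/(j+1)\<close>-periods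
  \<open>\<tau>\<^sub>j\<close> with \<open>|\<tau>\<^sub>j| \<ge> j\<close>. A uniform limit \<open>G\<close> of a subsequence of \<open>F(\<cdot> + \<tau>\<^sub>j)\<close> inherits the
  almost periods of \<open>F\<close> on the whole of \<open>I\<close>, since \<open>t + \<tau>\<^sub>j\<close> lies eventually in every \<open>I\<^sub>M\<close>;
  and \<open>F - G\<close> vanishes at infinity because \<open>F(t + \<tau>\<^sub>j) \<approx> F t\<close> for large \<open>t\<close>.\<close>

lemma uniformly_continuous_on_Times_UNIV_fstD:
  fixes F :: "'a::metric_space \<Rightarrow> 'b::metric_space \<Rightarrow> 'c::metric_space"
  assumes "uniformly_continuous_on (I \<times> UNIV) (\<lambda>(t, x). F t x)" and "e > 0"
  obtains d where "d > 0"
    and "\<And>s s' x. s \<in> I \<Longrightarrow> s' \<in> I \<Longrightarrow> dist s s' < d \<Longrightarrow> dist (F s x) (F s' x) < e"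
proof -
  obtain d where "d > 0" and d: "\<And>p p'. p \<in> I \<times> UNIV \<Longrightarrow> p' \<in> I \<times> UNIV \<Longrightarrow>
      dist p' p < d \<Longrightarrow> dist ((\<lambda>(t, x). F t x) p') ((\<lambda>(t, x). F t x) p) < e"
    using assms unfolding uniformly_continuous_on_def by metis
  have "dist (F s x) (F s' x) < e" if "s \<in> I" "s' \<in> I" "dist s s' < d" for s s' x
    using d[of "(s', x)" "(s, x)"] that by (simp add: dist_Pair_Pair)
  with \<open>d > 0\<close> show thesis by (rule that)
qed

lemma compact_diagonal_convergent_subseq:
  fixes u :: "nat \<Rightarrow> nat \<Rightarrow> 'a::metric_space"
  assumes compact: "\<And>j. compact (C j)" and mem: "\<And>j k. u j k \<in> C j"
  obtains r where "strict_mono r" and "\<And>j. convergent (\<lambda>k. u j (r k))"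
proof -
  define P where "P = (\<lambda>j (s::nat \<Rightarrow> nat). convergent (\<lambda>k. u j (s k)))"
  interpret subseqs P
  proof
    fix j and s :: "nat \<Rightarrow> nat"
    have "\<forall>k. u j (s k) \<in> C j" using mem by blast
    then obtain r L where "strict_mono r" "((\<lambda>k. u j (s k)) \<circ> r) \<longlonglongrightarrow> L"
      using seq_compactE[OF compact_imp_seq_compact[OF compact]] by metis
    then show "\<exists>r. strict_mono r \<and> P j (s \<circ> r)"
      unfolding P_def convergent_def by (auto simp: o_def)
  qed
  have "convergent (\<lambda>k. u j (diagseq k))" for j
  proof -
    have "P j (diagseq \<circ> (+) (Suc j))"
    proof (rule diagseq_holds)
      fix r s n assume "strict_mono (r :: nat \<Rightarrow> nat)" and "P n s"
      then show "P n (s \<circ> r)"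
        using convergent_subseq_convergent[of "\<lambda>k. u n (s k)" r] by (simp add: P_def o_def)
    qed
    then obtain L where "(\<lambda>k. u j (diagseq (k + Suc j))) \<longlonglongrightarrow> L"
      unfolding P_def convergent_def by (auto simp: o_def add.commute)
    then show ?thesis by (blast intro: convergentI LIMSEQ_offset)
  qed
  with subseq_diagseq show thesis by (rule that)
qed

lemma compact_set_of_approximating_translates:
  fixes F :: "real ^ 'n \<Rightarrow> 'x \<Rightarrow> 'y::real_normed_vector"
  assumes I_closed: "closed I"
    and F_ap: "asymp_bohr_B_ap_type1 I BB F"
    and cond_a: "\<forall>l>0. \<forall>M>0. \<exists>t0\<in>I. \<exists>k>0. \<forall>t\<in>I_ge I (M + l). \<exists>t0'\<in>I.
                   \<forall>t0''\<in>cball t0' l \<inter> I. t - t0'' \<in> cball t0 (k * l) \<inter> I_ge I M"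
    and cond_c: "\<forall>M>0. \<forall>a\<in>I_ge I M. \<forall>b\<in>I. a + b \<in> I_ge I M"
    and "B \<in> BB" and "e > 0"
  shows "\<exists>C h. compact C \<and> C \<subseteq> I \<and> (\<forall>b\<in>I. h b \<in> C) \<and>
    (\<forall>b\<in>I. \<forall>t\<in>I. \<forall>x\<in>B. norm (F (t + b) x - F (t + h b) x) \<le> e)"
proof -
  obtain l M where "l > 0" "M > 0" and period: "\<And>t0. t0 \<in> I \<Longrightarrow> \<exists>\<tau>\<in>cball t0 l \<inter> I.
      \<forall>t x. t \<in> I_ge I M \<and> t + \<tau> \<in> I_ge I M \<and> x \<in> B \<longrightarrow> norm (F (t + \<tau>) x - F t x) \<le> e"
    using F_ap \<open>B \<in> BB\<close> \<open>e > 0\<close> unfolding asymp_bohr_B_ap_type1_def by metis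
  obtain t0 k where "t0 \<in> I" and shadow: "\<And>b. b \<in> I_ge I (M + l) \<Longrightarrow> \<exists>t0'\<in>I.
      \<forall>t0''\<in>cball t0' l \<inter> I. b - t0'' \<in> cball t0 (k * l) \<inter> I_ge I M"
    using cond_a \<open>l > 0\<close> \<open>M > 0\<close> by metis
  define C where "C = (cball 0 (M + l) \<union> cball t0 (k * l)) \<inter> I"
  have "\<exists>c\<in>C. \<forall>t\<in>I. \<forall>x\<in>B. norm (F (t + b) x - F (t + c) x) \<le> e" if b: "b \<in> I" for b
  proof (cases "norm b \<le> M + l")
    case True
    then show ?thesis using b \<open>e > 0\<close> by (intro bexI[of _ b]) (auto simp: C_def dist_norm)
  next
    case False
    then have b_large: "b \<in> I_ge I (M + l)" using b by (simp add: I_ge_def)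
    then obtain t0' where "t0' \<in> I"
      and near: "\<And>t0''. t0'' \<in> cball t0' l \<inter> I \<Longrightarrow> b - t0'' \<in> cball t0 (k * l) \<inter> I_ge I M"
      using shadow by metis
    obtain \<tau> where \<tau>: "\<tau> \<in> cball t0' l \<inter> I" and period_\<tau>: "\<And>t x. t \<in> I_ge I M \<Longrightarrow>
        t + \<tau> \<in> I_ge I M \<Longrightarrow> x \<in> B \<Longrightarrow> norm (F (t + \<tau>) x - F t x) \<le> e"
      using period[OF \<open>t0' \<in> I\<close>] by metis
    have c: "b - \<tau> \<in> cball t0 (k * l) \<inter> I_ge I M" by (rule near[OF \<tau>])
    have "b \<in> I_ge I M" using b_large \<open>l > 0\<close> by (auto simp: I_ge_def)
    have "norm (F (t + b) x - F (t + (b - \<tau>)) x) \<le> e" if "t \<in> I" "x \<in> B" for t x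
    proof -
      have "t + (b - \<tau>) \<in> I_ge I M"
        using cond_c \<open>M > 0\<close> c \<open>t \<in> I\<close> by (metis IntD2 add.commute)
      moreover have "t + (b - \<tau>) + \<tau> \<in> I_ge I M"
        using cond_c \<open>M > 0\<close> \<open>b \<in> I_ge I M\<close> \<open>t \<in> I\<close> by (simp add: add.commute)
      ultimately show ?thesis using period_\<tau> \<open>x \<in> B\<close> by fastforce
    qed
    moreover have "b - \<tau> \<in> C" using c by (auto simp: C_def I_ge_def)
    ultimately show ?thesis by blast
  qed
  then obtain h where "\<And>b. b \<in> I \<Longrightarrow> h b \<in> C"
    and "\<And>b t x. b \<in> I \<Longrightarrow> t \<in> I \<Longrightarrow> x \<in> B \<Longrightarrow> norm (F (t + b) x - F (t + h b) x) \<le> e"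
    by metis
  moreover have "compact C"
    unfolding C_def by (intro compact_Int_closed compact_Un compact_cball I_closed)
  moreover have "C \<subseteq> I" by (auto simp: C_def)
  ultimately show ?thesis by (intro exI[of _ C] exI[of _ h]) blast
qed

lemma uniformly_Cauchy_on_translates:
  fixes F :: "real ^ 'n \<Rightarrow> 'x::metric_space \<Rightarrow> 'y::real_normed_vector"
  assumes I_add: "\<And>a b. a \<in> I \<Longrightarrow> b \<in> I \<Longrightarrow> a + b \<in> I"
    and F_uc: "uniformly_continuous_on (I \<times> UNIV) (\<lambda>(t, x). F t x)"
    and h_I: "\<And>j c. c \<in> I \<Longrightarrow> h j c \<in> I"
    and approx: "\<And>j c t x. c \<in> I \<Longrightarrow> t \<in> I \<Longrightarrow> x \<in> B \<Longrightarrow>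
                   norm (F (t + c) x - F (t + h j c) x) \<le> 1 / Suc j"
    and b_I: "\<And>k. b k \<in> I"
    and h_Cauchy: "\<And>j. Cauchy (\<lambda>k. h j (b k))"
  shows "uniformly_Cauchy_on (I \<times> B) (\<lambda>k (t, x). F (t + b k) x)"
proof (rule uniformly_Cauchy_onI)
  fix e :: real assume "e > 0"
  then obtain j where j: "1 / Suc j < e / 3"
    using reals_Archimedean[of "e / 3"] by (auto simp: inverse_eq_divide)
  have "e / 3 > 0" using \<open>e > 0\<close> by simp
  obtain d where "d > 0" and d: "\<And>s s' x. s \<in> I \<Longrightarrow> s' \<in> I \<Longrightarrow> dist s s' < d \<Longrightarrow>
      dist (F s x) (F s' x) < e / 3"
    using uniformly_continuous_on_Times_UNIV_fstD[OF F_uc \<open>e / 3 > 0\<close>] by metis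
  obtain N where N: "\<And>m n. m \<ge> N \<Longrightarrow> n \<ge> N \<Longrightarrow> dist (h j (b m)) (h j (b n)) < d"
    using metric_CauchyD[OF h_Cauchy[of j] \<open>d > 0\<close>] by blast
  have "dist (F (t + b m) x) (F (t + b n) x) < e"
    if "t \<in> I" "x \<in> B" "m \<ge> N" "n \<ge> N" for t x m n
  proof -
    have near: "dist (F (t + b k) x) (F (t + h j (b k)) x) < e / 3" for k
      using approx[where j=j and c="b k", OF b_I that(1,2)] j unfolding dist_norm
      by (meson le_less_trans)
    have "dist (F (t + h j (b m)) x) (F (t + h j (b n)) x) < e / 3"
      using N[OF that(3,4)] by (intro d I_add h_I b_I that(1)) simp
    moreover have "dist (F (t + h j (b n)) x) (F (t + b n) x) < e / 3"
      using near[of n] by (simp add: dist_commute)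
    ultimately show ?thesis by (rule dist_triangle_third[OF near[of m]])
  qed
  then show "\<exists>N. \<forall>p\<in>I \<times> B. \<forall>m\<ge>N. \<forall>n\<ge>N.
      dist ((\<lambda>k (t, x). F (t + b k) x) m p) ((\<lambda>k (t, x). F (t + b k) x) n p) < e"
    by (intro exI[of _ N]) auto
qed

lemma R_B_multi_ap_if_asymp_bohr_type1:
  fixes F :: "real ^ 'n \<Rightarrow> 'x::metric_space \<Rightarrow> 'y::banach"
  assumes I_closed: "closed I"
    and I_add: "\<And>a b. a \<in> I \<Longrightarrow> b \<in> I \<Longrightarrow> a + b \<in> I"
    and F_uc: "uniformly_continuous_on (I \<times> UNIV) (\<lambda>(t, x). F t x)"
    and F_ap: "asymp_bohr_B_ap_type1 I BB F"
    and cond_a: "\<forall>l>0. \<forall>M>0. \<exists>t0\<in>I. \<exists>k>0. \<forall>t\<in>I_ge I (M + l). \<exists>t0'\<in>I.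
                   \<forall>t0''\<in>cball t0' l \<inter> I. t - t0'' \<in> cball t0 (k * l) \<inter> I_ge I M"
    and cond_c: "\<forall>M>0. \<forall>a\<in>I_ge I M. \<forall>b\<in>I. a + b \<in> I_ge I M"
  shows "R_B_multi_ap I {b. \<forall>k. b k \<in> I} BB F"
  unfolding R_B_multi_ap_def
proof (intro ballI)
  fix B and b :: "nat \<Rightarrow> real ^ 'n" assume "B \<in> BB" and "b \<in> {b. \<forall>k. b k \<in> I}"
  then have b_I: "\<And>k. b k \<in> I" by simp
  have "\<forall>j. \<exists>C h. compact C \<and> C \<subseteq> I \<and> (\<forall>c\<in>I. h c \<in> C) \<and>
      (\<forall>c\<in>I. \<forall>t\<in>I. \<forall>x\<in>B. norm (F (t + c) x - F (t + h c) x) \<le> 1 / Suc j)"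
    by (intro allI compact_set_of_approximating_translates[OF I_closed F_ap cond_a cond_c \<open>B \<in> BB\<close>])
      simp
  then obtain C h where C: "\<And>j. compact (C j)" "\<And>j. C j \<subseteq> I"
    and h_C: "\<And>j c. c \<in> I \<Longrightarrow> h j c \<in> C j"
    and approx: "\<And>j c t x. c \<in> I \<Longrightarrow> t \<in> I \<Longrightarrow> x \<in> B \<Longrightarrow>
                   norm (F (t + c) x - F (t + h j c) x) \<le> 1 / Suc j"
    by metis
  obtain r where r: "strict_mono r" and conv: "\<And>j. convergent (\<lambda>k. h j (b (r k)))"
    using compact_diagonal_convergent_subseq[of C "\<lambda>j k. h j (b k)"] C(1) h_C b_I by metis
  have "uniformly_Cauchy_on (I \<times> B) (\<lambda>k (t, x). F (t + b (r k)) x)"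
    using uniformly_Cauchy_on_translates[OF I_add F_uc _ approx b_I conv[THEN convergent_Cauchy]]
      h_C C(2) by blast
  then obtain l where "uniform_limit (I \<times> B) (\<lambda>k (t, x). F (t + b (r k)) x) l sequentially"
    using Cauchy_uniformly_convergent unfolding uniformly_convergent_on_def by blast
  then show "\<exists>r Fs. strict_mono r \<and>
      uniform_limit (I \<times> B) (\<lambda>k (t, x). F (t + b (r k)) x) (\<lambda>(t, x). Fs t x) sequentially"
    using r by (intro exI[of _ r] exI[of _ "\<lambda>t x. l (t, x)"]) (simp add: case_prod_eta)
qed

lemma not_bounded_if_annuli_nonempty:
  assumes "\<exists>L>0. \<forall>k::nat. k \<ge> 1 \<longrightarrow> I_ge I (real k * L) - I_ge I (real (k + 1) * L) \<noteq> {}"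
  shows "\<not> bounded I"
proof
  assume "bounded I"
  then obtain a where a: "\<And>t. t \<in> I \<Longrightarrow> norm t \<le> a" by (auto simp: bounded_iff)
  obtain L where "L > 0"
    and annulus: "\<And>k::nat. k \<ge> 1 \<Longrightarrow> I_ge I (real k * L) - I_ge I (real (k + 1) * L) \<noteq> {}"
    using assms by blast
  define k where "k = nat \<lceil>a / L\<rceil> + 1"
  have "a / L < real k" unfolding k_def using real_nat_ceiling_ge[of "a / L"] by simp
  then have "a < real k * L" using \<open>L > 0\<close> by (simp add: field_simps)
  moreover obtain t where "t \<in> I_ge I (real k * L)" using annulus[of k] by (auto simp: k_def)
  ultimately show False using a by (force simp: I_ge_def)
qed

lemma asymp_bohr_type1_large_period:
  fixes F :: "real ^ 'n \<Rightarrow> 'x \<Rightarrow> 'y::real_normed_vector"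
  assumes F_ap: "asymp_bohr_B_ap_type1 I BB F"
    and cond_c: "\<forall>M>0. \<forall>a\<in>I_ge I M. \<forall>b\<in>I. a + b \<in> I_ge I M"
    and "\<not> bounded I" and "B \<in> BB" and "e > 0"
  shows "\<exists>\<tau> M. \<tau> \<in> I \<and> R \<le> norm \<tau> \<and>
    (\<forall>t\<in>I_ge I M. \<forall>x\<in>B. norm (F (t + \<tau>) x - F t x) \<le> e)"
proof -
  obtain l M where "M > 0" and period: "\<And>t0. t0 \<in> I \<Longrightarrow> \<exists>\<tau>\<in>cball t0 l \<inter> I.
      \<forall>t x. t \<in> I_ge I M \<and> t + \<tau> \<in> I_ge I M \<and> x \<in> B \<longrightarrow> norm (F (t + \<tau>) x - F t x) \<le> e"
    using F_ap \<open>B \<in> BB\<close> \<open>e > 0\<close> unfolding asymp_bohr_B_ap_type1_def by metis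
  obtain t0 where "t0 \<in> I" and "R + l < norm t0"
    using \<open>\<not> bounded I\<close> unfolding bounded_iff by (meson not_le)
  then obtain \<tau> where "\<tau> \<in> I" and "dist t0 \<tau> \<le> l" and period_\<tau>: "\<And>t x. t \<in> I_ge I M \<Longrightarrow>
      t + \<tau> \<in> I_ge I M \<Longrightarrow> x \<in> B \<Longrightarrow> norm (F (t + \<tau>) x - F t x) \<le> e"
    using period by (metis IntE mem_cball)
  have "R \<le> norm \<tau>"
    using norm_triangle_sub[of t0 \<tau>] \<open>R + l < norm t0\<close> \<open>dist t0 \<tau> \<le> l\<close> by (simp add: dist_norm)
  moreover have "t + \<tau> \<in> I_ge I M" if "t \<in> I_ge I M" for t
    using cond_c \<open>M > 0\<close> \<open>\<tau> \<in> I\<close> that by blast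
  ultimately show ?thesis using \<open>\<tau> \<in> I\<close> period_\<tau> by blast
qed

lemma bohr_ap_limit_of_translates:
  fixes F :: "real ^ 'n \<Rightarrow> 'x \<Rightarrow> 'y::real_normed_vector"
  assumes I_add: "\<And>a b. a \<in> I \<Longrightarrow> b \<in> I \<Longrightarrow> a + b \<in> I"
    and cond_c: "\<forall>M>0. \<forall>a\<in>I_ge I M. \<forall>b\<in>I. a + b \<in> I_ge I M"
    and F_ap: "asymp_bohr_B_ap_type1 I BB F" and "B \<in> BB" and "x0 \<in> B"
    and \<tau>_I: "\<And>k. \<tau> k \<in> I"
    and \<tau>_large: "filterlim (\<lambda>k. norm (\<tau> k)) at_top sequentially"
    and lim: "\<And>t. t \<in> I \<Longrightarrow> (\<lambda>k. F (t + \<tau> k) x0) \<longlonglongrightarrow> G t"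
    and "continuous_on I G"
  shows "bohr_ap I G"
  unfolding bohr_ap_def
proof (intro conjI allI impI \<open>continuous_on I G\<close>)
  fix e :: real assume "e > 0"
  then obtain l M where "l > 0" "M > 0" and period: "\<And>t0. t0 \<in> I \<Longrightarrow> \<exists>s\<in>cball t0 l \<inter> I.
      \<forall>t x. t \<in> I_ge I M \<and> t + s \<in> I_ge I M \<and> x \<in> B \<longrightarrow> norm (F (t + s) x - F t x) \<le> e"
    using F_ap \<open>B \<in> BB\<close> unfolding asymp_bohr_B_ap_type1_def by metis
  have "\<exists>s\<in>cball t0 l \<inter> I. \<forall>t\<in>I. norm (G (t + s) - G t) \<le> e" if "t0 \<in> I" for t0
  proof -
    obtain s where s: "s \<in> cball t0 l \<inter> I" and period_s: "\<And>t. t \<in> I_ge I M \<Longrightarrow>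
        t + s \<in> I_ge I M \<Longrightarrow> norm (F (t + s) x0 - F t x0) \<le> e"
      using period[OF \<open>t0 \<in> I\<close>] \<open>x0 \<in> B\<close> by blast
    have "norm (G (t + s) - G t) \<le> e" if "t \<in> I" for t
    proof -
      have "\<forall>\<^sub>F k in sequentially. \<tau> k \<in> I_ge I M"
        using \<tau>_large \<tau>_I unfolding filterlim_at_top by (auto simp: I_ge_def elim: eventually_mono)
      then have "\<forall>\<^sub>F k in sequentially. dist (F (t + s + \<tau> k) x0) (F (t + \<tau> k) x0) \<le> e"
      proof (rule eventually_mono)
        fix k assume "\<tau> k \<in> I_ge I M"
        then have "\<tau> k + t \<in> I_ge I M" using cond_c \<open>M > 0\<close> \<open>t \<in> I\<close> by blast
        moreover from this have "\<tau> k + t + s \<in> I_ge I M" using cond_c \<open>M > 0\<close> s by blast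
        ultimately show "dist (F (t + s + \<tau> k) x0) (F (t + \<tau> k) x0) \<le> e"
          using period_s[of "\<tau> k + t"] by (simp add: dist_norm ac_simps)
      qed
      moreover have "t + s \<in> I" using I_add s \<open>t \<in> I\<close> by blast
      ultimately have "dist (G (t + s)) (G t) \<le> e"
        using tendsto_upperbound[OF tendsto_dist[OF lim lim]] \<open>t \<in> I\<close> by simp
      then show ?thesis by (simp add: dist_norm)
    qed
    with s show ?thesis by blast
  qed
  with \<open>l > 0\<close> show "\<exists>l>0. \<forall>t0\<in>I. \<exists>\<tau>\<in>cball t0 l \<inter> I. \<forall>t\<in>I. norm (G (t + \<tau>) - G t) \<le> e"
    by blast
qed

lemma asymp_close_to_limit_of_translates:
  fixes f G :: "real ^ 'n \<Rightarrow> 'y::real_normed_vector"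
  assumes ul: "uniform_limit I (\<lambda>k t. f (t + \<tau> k)) G sequentially"
    and period: "\<And>k t. t \<in> I_ge I (M k) \<Longrightarrow> norm (f (t + \<tau> k) - f t) \<le> \<epsilon> k"
    and "\<epsilon> \<longlonglongrightarrow> 0"
  shows "\<forall>e>0. \<exists>M. \<forall>t\<in>I. M \<le> norm t \<longrightarrow> norm (f t - G t) \<le> e"
proof (intro allI impI)
  fix e :: real assume "e > 0"
  then have "e / 2 > 0" by simp
  have "\<forall>\<^sub>F k in sequentially. (\<forall>t\<in>I. dist (f (t + \<tau> k)) (G t) < e / 2) \<and> \<epsilon> k < e / 2"
    using uniform_limitD[OF ul \<open>e / 2 > 0\<close>] order_tendstoD(2)[OF \<open>\<epsilon> \<longlonglongrightarrow> 0\<close> \<open>e / 2 > 0\<close>]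
    by (rule eventually_conj)
  then obtain k where close: "\<And>t. t \<in> I \<Longrightarrow> dist (f (t + \<tau> k)) (G t) < e / 2"
    and "\<epsilon> k < e / 2"
    using eventually_happens'[OF sequentially_bot] by blast
  have "norm (f t - G t) \<le> e" if "t \<in> I" "M k \<le> norm t" for t
  proof -
    have "norm (f t - G t) \<le> norm (f (t + \<tau> k) - G t) + norm (f (t + \<tau> k) - f t)"
      using norm_triangle_ineq4[of "f (t + \<tau> k) - G t" "f (t + \<tau> k) - f t"] by simp
    also have "\<dots> \<le> e"
      using close[OF \<open>t \<in> I\<close>] period[of t k] \<open>\<epsilon> k < e / 2\<close> that by (simp add: dist_norm I_ge_def)
    finally show ?thesis .
  qed
  then show "\<exists>M. \<forall>t\<in>I. M \<le> norm t \<longrightarrow> norm (f t - G t) \<le> e" by blast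
qed

lemma asymp_bohr_ap_section:
  fixes F :: "real ^ 'n \<Rightarrow> 'x \<Rightarrow> 'y::real_normed_vector"
  assumes I_add: "\<And>a b. a \<in> I \<Longrightarrow> b \<in> I \<Longrightarrow> a + b \<in> I"
    and cond_c: "\<forall>M>0. \<forall>a\<in>I_ge I M. \<forall>b\<in>I. a + b \<in> I_ge I M"
    and "\<not> bounded I"
    and F_cont: "continuous_on I (\<lambda>t. F t x0)"
    and F_ap: "asymp_bohr_B_ap_type1 I BB F"
    and multi: "R_B_multi_ap I {b. \<forall>k. b k \<in> I} BB F"
    and "B \<in> BB" and "x0 \<in> B"
  shows "asymp_bohr_ap I (\<lambda>t. F t x0)"
proof -
  have "\<forall>j. \<exists>\<tau> M. \<tau> \<in> I \<and> real j \<le> norm \<tau> \<and>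
      (\<forall>t\<in>I_ge I M. \<forall>x\<in>B. norm (F (t + \<tau>) x - F t x) \<le> inverse (Suc j))"
    by (intro allI asymp_bohr_type1_large_period[OF F_ap cond_c \<open>\<not> bounded I\<close> \<open>B \<in> BB\<close>]) simp
  then obtain \<tau> M where \<tau>_I: "\<And>j. \<tau> j \<in> I" and \<tau>_large: "\<And>j. real j \<le> norm (\<tau> j)"
    and period: "\<And>j t x. t \<in> I_ge I (M j) \<Longrightarrow> x \<in> B \<Longrightarrow>
                   norm (F (t + \<tau> j) x - F t x) \<le> inverse (Suc j)"
    by metis
  obtain r Fs where r: "strict_mono r" and ul: "uniform_limit (I \<times> B)
      (\<lambda>k (t, x). F (t + \<tau> (r k)) x) (\<lambda>(t, x). Fs t x) sequentially"
    using multi \<open>B \<in> BB\<close> \<tau>_I unfolding R_B_multi_ap_def by blast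
  from uniform_limit_compose'[OF ul, of "\<lambda>t. (t, x0)" I]
  have lim: "uniform_limit I (\<lambda>k t. F (t + \<tau> (r k)) x0) (\<lambda>t. Fs t x0) sequentially"
    using \<open>x0 \<in> B\<close> by auto
  have "continuous_on I (\<lambda>t. F (t + \<tau> (r k)) x0)" for k
    by (rule continuous_on_compose2[OF F_cont]) (auto intro: continuous_intros I_add \<tau>_I)
  then have G_cont: "continuous_on I (\<lambda>t. Fs t x0)"
    by (intro uniform_limit_theorem[OF _ lim]) auto
  have "filterlim (\<lambda>j. norm (\<tau> j)) at_top sequentially"
    using filterlim_at_top_mono[OF filterlim_real_sequentially] \<tau>_large by auto
  then have \<tau>r_large: "filterlim (\<lambda>k. norm (\<tau> (r k))) at_top sequentially"
    using filterlim_compose filterlim_subseq[OF r] by blast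
  have errors_vanish: "(\<lambda>k. inverse (real (Suc (r k)))) \<longlonglongrightarrow> 0"
    using LIMSEQ_subseq_LIMSEQ[OF LIMSEQ_inverse_real_of_nat r] by (simp add: o_def)
  have "bohr_ap I (\<lambda>t. Fs t x0)"
    using bohr_ap_limit_of_translates[where \<tau>="\<lambda>k. \<tau> (r k)", OF I_add cond_c F_ap \<open>B \<in> BB\<close>
        \<open>x0 \<in> B\<close> \<tau>_I \<tau>r_large tendsto_uniform_limitI[OF lim] G_cont] .
  moreover have "\<forall>e>0. \<exists>M. \<forall>t\<in>I. M \<le> norm t \<longrightarrow> norm (F t x0 - Fs t x0) \<le> e"
    by (rule asymp_close_to_limit_of_translates[where f="\<lambda>t. F t x0" and M="\<lambda>k. M (r k)",
          OF lim period[OF _ \<open>x0 \<in> B\<close>] errors_vanish])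
  moreover have "continuous_on I (\<lambda>t. F t x0 - Fs t x0)"
    by (intro continuous_on_diff F_cont G_cont)
  ultimately show ?thesis
    unfolding asymp_bohr_ap_def by (intro exI[of _ "\<lambda>t. Fs t x0"] exI[of _ "\<lambda>t. F t x0 - Fs t x0"]) simp
qed

theorem theorem2p33:
  fixes I :: "(real ^ 'n) set"
    and BB :: "('x::banach) set set"
    and F :: "real ^ 'n \<Rightarrow> 'x \<Rightarrow> 'y::banach"
  assumes I_ne: "I \<noteq> {}" and I_closed: "closed I"
    and I_add: "\<And>a b. a \<in> I \<Longrightarrow> b \<in> I \<Longrightarrow> a + b \<in> I"
    and BB_compact: "\<And>B. B \<in> BB \<Longrightarrow> compact B"
    and BB_cover: "\<And>x. \<exists>B\<in>BB. x \<in> B"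
    and F_uc: "uniformly_continuous_on (I \<times> UNIV) (\<lambda>(t, x). F t x)"
    and F_ap: "asymp_bohr_B_ap_type1 I BB F"
    and cond_a: "\<forall>l>0. \<forall>M>0. \<exists>t0\<in>I. \<exists>k>0. \<forall>t\<in>I_ge I (M + l). \<exists>t0'\<in>I.
                   \<forall>t0''\<in>cball t0' l \<inter> I. t - t0'' \<in> cball t0 (k * l) \<inter> I_ge I M"
    and cond_b: "\<exists>L>0. \<forall>k::nat. k \<ge> 1 \<longrightarrow> I_ge I (real k * L) - I_ge I (real (k + 1) * L) \<noteq> {}"
    and cond_c: "\<forall>M>0. \<forall>a\<in>I_ge I M. \<forall>b\<in>I. a + b \<in> I_ge I M"
  shows "R_B_multi_ap I {b. \<forall>k. b k \<in> I} BB F \<and>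
         (((UNIV :: 'x set) = {0} \<and> BB = {UNIV}) \<longrightarrow> asymp_bohr_ap I (\<lambda>t. F t 0))"
proof (intro conjI impI)
  show multi: "R_B_multi_ap I {b. \<forall>k. b k \<in> I} BB F"
    by (rule R_B_multi_ap_if_asymp_bohr_type1[OF I_closed I_add F_uc F_ap cond_a cond_c])
  obtain B where "B \<in> BB" and "0 \<in> B" using BB_cover by blast
  have "continuous_on I (\<lambda>t. (\<lambda>(t, x). F t x) (t, 0))"
    by (rule continuous_on_compose2[OF uniformly_continuous_imp_continuous[OF F_uc]])
      (auto intro!: continuous_intros)
  then show "asymp_bohr_ap I (\<lambda>t. F t 0)"
    using asymp_bohr_ap_section[OF I_add cond_c not_bounded_if_annuli_nonempty[OF cond_b] _
        F_ap multi \<open>B \<in> BB\<close> \<open>0 \<in> B\<close>] by simp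
qed

end
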